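(* Let $\kappa_r\ge0$ be an integer with $\kappa_c>\kappa_r$, let $\tilde r:\mathcal Z_{N_{i_0}^{\kappa_r}}\to[0,1]$ and $\gamma\in(0,1)$. Define the cost of the original chain $C(z)=\sum_{t\ge0}\gamma^t\,\mathbb E[\tilde r(z_{N_{i_0}^{\kappa_r}}(t))\mid z(0)=z]$ for $z\in\mathcal Z$, and the cost of the sub-chain $\tilde C(x)=\sum_{t\ge0}\gamma^t\,\mathbb E[\tilde r(x_{N_{i_0}^{\kappa_r}}(t))\mid x(0)=x]$ for $x\in\mathcal Z_N$, where $(x(t))$ is the Markov chain on $\mathcal Z_N$ with kernel $\overline{\mathbb P}$. Then $$\sup_{z\in\mathcal Z}\left|\tilde C(z_N)-C(z)\right|\le\frac{\gamma^{\kappa_c-\kappa_r+1}}{1-\gamma}.$$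
   Context: Localized Markov chain: agents $\mathcal N=\{1,\dots,n\}$ on an undirected graph with graph distance $\mathrm{dist}$; $N_i^\kappa=\{j:\mathrm{dist}(i,j)\le\kappa\}$, $\mathcal N_i=N_i^1$. Agent $j$ has a finite local state space $\mathcal Z_j$; $\mathcal Z=\prod_j\mathcal Z_j$, and $z_I,\mathcal Z_I$ denote joint states/spaces of $I\subseteq\mathcal N$, with $-I=\mathcal N\setminus I$. The transition kernel is $\mathbb P(z'\mid z)=\prod_j\mathbb P_j(z_j'\mid z_{\mathcal N_j})$, and it is assumed aperiodic and irreducible, with (full-support) stationary distribution $\overline\pi$. Fix an agent $i_0$ and an integer $\kappa_c\ge1$, and let $N=N_{i_0}^{\kappa_c}$, $\overline\pi_N$ the marginal of $\overline\pi$ on $\mathcal Z_N$, and $\mathbb P_N(x'\mid z)=\sum_{z'_{-N}}\mathbb P(x',z'_{-N}\mid z)$ for $x'\in\mathcal Z_N$, $z\in\mathcal Z$. The sub-chain kernel on $\mathcal Z_N$ is $$\overline{\mathbb P}(x'\mid x)=\sum_{z_{-N}\in\mathcal Z_{-N}}\frac{\overline\pi(x,z_{-N})}{\overline\pi_N(x)}\,\mathbb P_N\big(x'\mid(x,z_{-N})\big),\qquad x,x'\in\mathcal Z_N.$$ *)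

theory Defs
  imports "HOL-Analysis.Analysis"
begin

definition nbhd :: "('a \<Rightarrow> 'a \<Rightarrow> bool) \<Rightarrow> nat \<Rightarrow> 'a \<Rightarrow> 'a set" where
  "nbhd E k i = {j. \<exists>m\<le>k. (i, j) \<in> {(x, y). E x y} ^^ m}"

definition merge :: "'a set \<Rightarrow> ('a \<Rightarrow> 's) \<Rightarrow> ('a \<Rightarrow> 's) \<Rightarrow> 'a \<Rightarrow> 's" where
  "merge I x w = (\<lambda>j. if j \<in> I then x j else w j)"

text \<open>n-step transition probabilities of a kernel K on a finite state set S,
  with K x y = P(y | x).\<close>
fun kpow :: "'b set \<Rightarrow> ('b \<Rightarrow> 'b \<Rightarrow> real) \<Rightarrow> nat \<Rightarrow> 'b \<Rightarrow> 'b \<Rightarrow> real" where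
  "kpow S K 0 x y = (if x = y then 1 else 0)"
| "kpow S K (Suc n) x y = (\<Sum>u\<in>S. kpow S K n x u * K u y)"

definition irreducible_on :: "'b set \<Rightarrow> ('b \<Rightarrow> 'b \<Rightarrow> real) \<Rightarrow> bool" where
  "irreducible_on S K = (\<forall>x\<in>S. \<forall>y\<in>S. \<exists>n. kpow S K n x y > 0)"

definition aperiodic_on :: "'b set \<Rightarrow> ('b \<Rightarrow> 'b \<Rightarrow> real) \<Rightarrow> bool" where
  "aperiodic_on S K = (\<forall>x\<in>S. Gcd {n. 0 < n \<and> kpow S K n x x > 0} = (1::nat))"

definition stationary_on :: "'b set \<Rightarrow> ('b \<Rightarrow> 'b \<Rightarrow> real) \<Rightarrow> ('b \<Rightarrow> real) \<Rightarrow> bool" where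
  "stationary_on S K p = ((\<forall>x\<in>S. p x \<ge> 0) \<and> sum p S = 1 \<and>
      (\<forall>y\<in>S. (\<Sum>x\<in>S. p x * K x y) = p y))"

definition joint_kernel :: "('a::finite \<Rightarrow> 'a \<Rightarrow> bool) \<Rightarrow> ('a \<Rightarrow> ('a \<Rightarrow> 's) \<Rightarrow> 's \<Rightarrow> real)
      \<Rightarrow> ('a \<Rightarrow> 's) \<Rightarrow> ('a \<Rightarrow> 's) \<Rightarrow> real" where
  "joint_kernel E Pl z z' = (\<Prod>j\<in>UNIV. Pl j (restrict z (nbhd E 1 j)) (z' j))"

definition marg :: "'a set \<Rightarrow> ('a \<Rightarrow> 's set) \<Rightarrow> (('a \<Rightarrow> 's) \<Rightarrow> real) \<Rightarrow> ('a \<Rightarrow> 's) \<Rightarrow> real" where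
  "marg N Zs p x = (\<Sum>w\<in>Pi\<^sub>E (- N) Zs. p (merge N x w))"

definition kernN :: "'a set \<Rightarrow> ('a \<Rightarrow> 's set) \<Rightarrow> (('a \<Rightarrow> 's) \<Rightarrow> ('a \<Rightarrow> 's) \<Rightarrow> real)
      \<Rightarrow> ('a \<Rightarrow> 's) \<Rightarrow> ('a \<Rightarrow> 's) \<Rightarrow> real" where
  "kernN N Zs K z x' = (\<Sum>w'\<in>Pi\<^sub>E (- N) Zs. K z (merge N x' w'))"

definition sub_kernel :: "'a set \<Rightarrow> ('a \<Rightarrow> 's set) \<Rightarrow> (('a \<Rightarrow> 's) \<Rightarrow> real)
      \<Rightarrow> (('a \<Rightarrow> 's) \<Rightarrow> ('a \<Rightarrow> 's) \<Rightarrow> real) \<Rightarrow> ('a \<Rightarrow> 's) \<Rightarrow> ('a \<Rightarrow> 's) \<Rightarrow> real" where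
  "sub_kernel N Zs p K x x' =
     (\<Sum>w\<in>Pi\<^sub>E (- N) Zs. p (merge N x w) / marg N Zs p x * kernN N Zs K (merge N x w) x')"

definition disc_cost :: "'b set \<Rightarrow> ('b \<Rightarrow> 'b \<Rightarrow> real) \<Rightarrow> ('b \<Rightarrow> real) \<Rightarrow> real \<Rightarrow> 'b \<Rightarrow> real" where
  "disc_cost S K f \<gamma> x = (\<Sum>t. \<gamma> ^ t * (\<Sum>y\<in>S. kpow S K t x y * f y))"

end

theory Submission
  imports Defs
begin

text \<open>One step of the product kernel turns a function of the agents within distance \<open>k\<close> of
  \<open>i0\<close> into a conditional expectation depending only on the agents within distance \<open>k + 1\<close>.
  Hence, as long as \<open>\<kappa>r + t \<le> \<kappa>c\<close>, the expected reward at time \<open>t\<close> is a function of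
  the state on \<open>N\<close> alone, and the sub-chain reproduces it exactly: its kernel averages one step
  of the full chain over the conditional law (under \<open>\<pi>\<close>) of the agents outside \<open>N\<close>, and
  averaging something that ignores those agents changes nothing. The two discounted costs thus
  share their first \<open>\<kappa>c - \<kappa>r + 1\<close> terms, while later terms differ by at most \<open>\<gamma>\<^sup>t\<close>.\<close>

lemma merge_in_PiE_UNIV:
  "a \<in> Pi\<^sub>E A Zs \<Longrightarrow> b \<in> Pi\<^sub>E (- A) Zs \<Longrightarrow> Defs.merge A a b \<in> Pi\<^sub>E UNIV Zs"
  unfolding Defs.merge_def by (auto simp: PiE_iff)

lemma restrict_merge_left: "a \<in> Pi\<^sub>E A Zs \<Longrightarrow> restrict (Defs.merge A a b) A = a"
  unfolding Defs.merge_def by (auto simp: PiE_iff extensional_def)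

lemma restrict_merge_right: "b \<in> Pi\<^sub>E (- A) Zs \<Longrightarrow> restrict (Defs.merge A a b) (- A) = b"
  unfolding Defs.merge_def by (auto simp: PiE_iff extensional_def)

lemma merge_restrict: "Defs.merge A (restrict y A) (restrict y (- A)) = y"
  unfolding Defs.merge_def by auto

lemma restrict_PiE_UNIV: "z \<in> Pi\<^sub>E UNIV Zs \<Longrightarrow> restrict z B \<in> Pi\<^sub>E B Zs"
  by auto

lemma bij_betw_merge:
  "bij_betw (\<lambda>(a, b). Defs.merge A a b) (Pi\<^sub>E A Zs \<times> Pi\<^sub>E (- A) Zs) (Pi\<^sub>E UNIV Zs)"
  by (rule bij_betw_byWitness[where f' = "\<lambda>y. (restrict y A, restrict y (- A))"])
     (auto simp: restrict_merge_left restrict_merge_right merge_restrict intro!: merge_in_PiE_UNIV)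

lemma sum_PiE_UNIV_split:
  assumes "\<And>j. finite (Zs j)"
  shows "(\<Sum>y\<in>Pi\<^sub>E UNIV Zs. h y) = (\<Sum>a\<in>Pi\<^sub>E A Zs. \<Sum>b\<in>Pi\<^sub>E (- A) Zs. h (Defs.merge A a b))"
proof -
  have "(\<Sum>y\<in>Pi\<^sub>E UNIV Zs. h y) = (\<Sum>(a, b)\<in>Pi\<^sub>E A Zs \<times> Pi\<^sub>E (- A) Zs. h (Defs.merge A a b))"
    using sum.reindex_bij_betw[OF bij_betw_merge, of h] by (simp add: case_prod_unfold)
  then show ?thesis
    by (simp add: sum.cartesian_product)
qed

lemma sum_prod_PiE_marginal:
  fixes p :: "'a::finite \<Rightarrow> 'b \<Rightarrow> real"
  assumes fin: "\<And>j. finite (Zs j)"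
    and one: "\<And>j. j \<notin> A \<Longrightarrow> (\<Sum>s\<in>Zs j. p j s) = 1"
    and f_eq: "\<And>a b. a \<in> Pi\<^sub>E A Zs \<Longrightarrow> b \<in> Pi\<^sub>E (- A) Zs \<Longrightarrow> f (Defs.merge A a b) = F a"
  shows "(\<Sum>y\<in>Pi\<^sub>E UNIV Zs. (\<Prod>j\<in>UNIV. p j (y j)) * f y)
       = (\<Sum>a\<in>Pi\<^sub>E A Zs. (\<Prod>j\<in>A. p j (a j)) * F a)"
proof -
  have prod_merge: "(\<Prod>j\<in>UNIV. p j (Defs.merge A a b j)) = (\<Prod>j\<in>A. p j (a j)) * (\<Prod>j\<in>- A. p j (b j))"
    for a b
    using prod.union_disjoint[of A "- A" "\<lambda>j. p j (Defs.merge A a b j)"]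
    by (simp add: Compl_partition Defs.merge_def)
  have marginal: "(\<Sum>b\<in>Pi\<^sub>E (- A) Zs. \<Prod>j\<in>- A. p j (b j)) = 1"
    using prod_sum_PiE[of "- A" Zs p] fin one by simp
  have "(\<Sum>y\<in>Pi\<^sub>E UNIV Zs. (\<Prod>j\<in>UNIV. p j (y j)) * f y)
     = (\<Sum>a\<in>Pi\<^sub>E A Zs. \<Sum>b\<in>Pi\<^sub>E (- A) Zs. (\<Prod>j\<in>A. p j (a j)) * F a * (\<Prod>j\<in>- A. p j (b j)))"
    by (auto simp: sum_PiE_UNIV_split[OF fin, where A = A] prod_merge f_eq intro!: sum.cong)
  also have "\<dots> = (\<Sum>a\<in>Pi\<^sub>E A Zs. (\<Prod>j\<in>A. p j (a j)) * F a)"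
    by (simp add: sum_distrib_left[symmetric] marginal)
  finally show ?thesis .
qed

definition kernel_op :: "'b set \<Rightarrow> ('b \<Rightarrow> 'b \<Rightarrow> real) \<Rightarrow> ('b \<Rightarrow> real) \<Rightarrow> 'b \<Rightarrow> real" where
  "kernel_op S K f u = (\<Sum>y\<in>S. K u y * f y)"

definition stochastic_on :: "'b set \<Rightarrow> ('b \<Rightarrow> 'b \<Rightarrow> real) \<Rightarrow> bool" where
  "stochastic_on S K \<longleftrightarrow> (\<forall>u\<in>S. \<forall>y\<in>S. 0 \<le> K u y) \<and> (\<forall>u\<in>S. (\<Sum>y\<in>S. K u y) = 1)"

lemma kpow_sum_eq_funpow_kernel_op:
  assumes "finite S" "x \<in> S"
  shows "(\<Sum>y\<in>S. kpow S K t x y * f y) = (kernel_op S K ^^ t) f x"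
proof (induction t arbitrary: f)
  case 0
  have "(\<Sum>y\<in>S. kpow S K 0 x y * f y) = (\<Sum>y\<in>S. if x = y then f y else 0)"
    by (intro sum.cong) auto
  then show ?case using assms by simp
next
  case (Suc t)
  have "(\<Sum>y\<in>S. kpow S K (Suc t) x y * f y) = (\<Sum>u\<in>S. kpow S K t x u * kernel_op S K f u)"
    unfolding kpow.simps kernel_op_def sum_distrib_left sum_distrib_right mult.assoc
    by (rule sum.swap)
  also have "\<dots> = (kernel_op S K ^^ Suc t) f x"
    by (simp add: Suc funpow_Suc_right del: funpow.simps)
  finally show ?case .
qed

lemma disc_cost_eq_suminf_funpow:
  "finite S \<Longrightarrow> x \<in> S \<Longrightarrow> disc_cost S K f \<gamma> x = (\<Sum>t. \<gamma> ^ t * (kernel_op S K ^^ t) f x)"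
  by (simp add: disc_cost_def kpow_sum_eq_funpow_kernel_op)

lemma kernel_op_unit_interval:
  assumes "stochastic_on S K" "\<forall>y\<in>S. 0 \<le> f y \<and> f y \<le> 1" "u \<in> S"
  shows "0 \<le> kernel_op S K f u \<and> kernel_op S K f u \<le> 1"
proof
  show "0 \<le> kernel_op S K f u"
    using assms unfolding kernel_op_def stochastic_on_def by (intro sum_nonneg) auto
  have "kernel_op S K f u \<le> (\<Sum>y\<in>S. K u y)"
    using assms unfolding kernel_op_def stochastic_on_def by (intro sum_mono) (simp add: mult_left_le)
  then show "kernel_op S K f u \<le> 1"
    using assms unfolding stochastic_on_def by simp
qed

lemma funpow_kernel_op_unit_interval:
  assumes "stochastic_on S K" "\<forall>y\<in>S. 0 \<le> f y \<and> f y \<le> 1"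
  shows "\<forall>u\<in>S. 0 \<le> (kernel_op S K ^^ t) f u \<and> (kernel_op S K ^^ t) f u \<le> 1"
proof (induction t)
  case (Suc t)
  then show ?case using kernel_op_unit_interval[OF assms(1)] by simp
qed (use assms in simp)

lemma discounted_suminf_diff_le:
  fixes a b :: "nat \<Rightarrow> real"
  assumes a: "\<And>t. 0 \<le> a t \<and> a t \<le> 1" and b: "\<And>t. 0 \<le> b t \<and> b t \<le> 1"
    and eq: "\<And>t. t \<le> m \<Longrightarrow> a t = b t" and \<gamma>: "0 < \<gamma>" "\<gamma> < 1"
  shows "\<bar>(\<Sum>t. \<gamma> ^ t * a t) - (\<Sum>t. \<gamma> ^ t * b t)\<bar> \<le> \<gamma> ^ (m + 1) / (1 - \<gamma>)"
proof -
  define d where "d t = \<gamma> ^ t * (a t - b t)" for t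
  have geo: "summable (\<lambda>t. \<gamma> ^ t)"
    using \<gamma> by (intro summable_geometric) simp
  have d_le: "\<bar>d t\<bar> \<le> \<gamma> ^ t" for t
  proof -
    have "\<bar>a t - b t\<bar> \<le> 1"
      using a[of t] b[of t] by (auto simp: abs_le_iff)
    then show ?thesis
      unfolding d_def using \<gamma> by (simp add: abs_mult mult_left_le)
  qed
  have summable_weighted: "summable (\<lambda>t. \<gamma> ^ t * c t)" if "\<And>t. 0 \<le> c t \<and> c t \<le> 1" for c
    by (rule summable_comparison_test[OF _ geo]) (use that \<gamma> in \<open>auto simp: abs_mult mult_left_le\<close>)
  have tail_geo: "summable (\<lambda>n. \<gamma> ^ (n + (m + 1)))"
    by (rule summable_ignore_initial_segment[OF geo])
  have tail_abs: "summable (\<lambda>n. \<bar>d (n + (m + 1))\<bar>)"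
    by (rule summable_comparison_test[OF _ tail_geo])
       (intro exI[of _ 0] allI impI, simp only: real_norm_def abs_abs d_le)
  have sa: "summable (\<lambda>t. \<gamma> ^ t * a t)" and sb: "summable (\<lambda>t. \<gamma> ^ t * b t)"
    using summable_weighted a b by blast+
  have "(\<Sum>t. \<gamma> ^ t * a t) - (\<Sum>t. \<gamma> ^ t * b t) = (\<Sum>t. d t)"
    unfolding d_def right_diff_distrib using suminf_diff[OF sa sb] by simp
  also have "\<dots> = (\<Sum>n. d (n + (m + 1))) + (\<Sum>t<m + 1. d t)"
    using summable_diff[OF sa sb] unfolding d_def right_diff_distrib
    by (rule suminf_split_initial_segment)
  also have "(\<Sum>t<m + 1. d t) = 0"
    unfolding d_def using eq by (intro sum.neutral) auto
  finally have "\<bar>(\<Sum>t. \<gamma> ^ t * a t) - (\<Sum>t. \<gamma> ^ t * b t)\<bar> \<le> (\<Sum>n. \<bar>d (n + (m + 1))\<bar>)"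
    using summable_rabs[OF tail_abs] by simp
  also have "\<dots> \<le> (\<Sum>n. \<gamma> ^ (n + (m + 1)))"
    by (rule suminf_le[OF d_le tail_abs tail_geo])
  also have "\<dots> = \<gamma> ^ (m + 1) * (\<Sum>n. \<gamma> ^ n)"
    by (subst suminf_mult[OF geo, symmetric]) (simp add: power_add mult_ac)
  also have "\<dots> = \<gamma> ^ (m + 1) / (1 - \<gamma>)"
    using \<gamma> by (simp add: suminf_geometric)
  finally show ?thesis .
qed

lemma disc_cost_diff_le:
  assumes "finite S" "stochastic_on S K" "\<forall>y\<in>S. 0 \<le> f y \<and> f y \<le> 1" "x \<in> S"
    and "finite S'" "stochastic_on S' K'" "\<forall>y\<in>S'. 0 \<le> f' y \<and> f' y \<le> 1" "x' \<in> S'"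
    and "\<And>t. t \<le> m \<Longrightarrow> (kernel_op S K ^^ t) f x = (kernel_op S' K' ^^ t) f' x'"
    and "0 < \<gamma>" "\<gamma> < 1"
  shows "\<bar>disc_cost S K f \<gamma> x - disc_cost S' K' f' \<gamma> x'\<bar> \<le> \<gamma> ^ (m + 1) / (1 - \<gamma>)"
  unfolding disc_cost_eq_suminf_funpow[OF assms(1,4)] disc_cost_eq_suminf_funpow[OF assms(5,8)]
  using funpow_kernel_op_unit_interval[OF assms(2,3)] funpow_kernel_op_unit_interval[OF assms(6,7)]
    assms(4,8-11)
  by (intro discounted_suminf_diff_le) auto

definition depends_only_on :: "('a \<Rightarrow> 's) set \<Rightarrow> 'a set \<Rightarrow> (('a \<Rightarrow> 's) \<Rightarrow> real) \<Rightarrow> bool" where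
  "depends_only_on S A f \<longleftrightarrow> (\<forall>y\<in>S. \<forall>y'\<in>S. (\<forall>j\<in>A. y j = y' j) \<longrightarrow> f y = f y')"

lemma depends_only_on_restrict: "depends_only_on S A (\<lambda>y. r (restrict y A))"
  unfolding depends_only_on_def by (metis restrict_ext)

lemma depends_only_on_mono: "depends_only_on S A f \<Longrightarrow> A \<subseteq> B \<Longrightarrow> depends_only_on S B f"
  unfolding depends_only_on_def by blast

lemma nbhd_mono: "k \<le> k' \<Longrightarrow> nbhd E k i \<subseteq> nbhd E k' i"
  unfolding nbhd_def using le_trans by blast

lemma nbhd_Suc:
  assumes "j \<in> nbhd E k i" "l \<in> nbhd E 1 j"
  shows "l \<in> nbhd E (Suc k) i"
proof -
  obtain m m' where "m \<le> k" "(i, j) \<in> {(x, y). E x y} ^^ m"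
    and "m' \<le> 1" "(j, l) \<in> {(x, y). E x y} ^^ m'"
    using assms unfolding nbhd_def by blast
  then have "m + m' \<le> Suc k" "(i, l) \<in> {(x, y). E x y} ^^ (m + m')"
    by (auto simp: relpow_add)
  then show ?thesis
    unfolding nbhd_def by blast
qed

lemma stochastic_on_joint_kernel:
  assumes fin: "\<And>j. finite (Zs j)"
    and Pl_nonneg: "\<forall>j. \<forall>x\<in>Pi\<^sub>E (nbhd E 1 j) Zs. \<forall>s\<in>Zs j. Pl j x s \<ge> 0"
    and Pl_sum: "\<forall>j. \<forall>x\<in>Pi\<^sub>E (nbhd E 1 j) Zs. (\<Sum>s\<in>Zs j. Pl j x s) = 1"
  shows "stochastic_on (Pi\<^sub>E UNIV Zs) (joint_kernel E Pl)"
  unfolding stochastic_on_def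
proof (intro conjI ballI)
  fix u y assume "u \<in> Pi\<^sub>E UNIV Zs" "y \<in> Pi\<^sub>E UNIV Zs"
  then show "0 \<le> joint_kernel E Pl u y"
    using Pl_nonneg restrict_PiE_UNIV unfolding joint_kernel_def by (intro prod_nonneg) blast
next
  fix u assume u: "u \<in> Pi\<^sub>E UNIV Zs"
  have "(\<Sum>y\<in>Pi\<^sub>E UNIV Zs. joint_kernel E Pl u y) = (\<Prod>j\<in>UNIV. \<Sum>s\<in>Zs j. Pl j (restrict u (nbhd E 1 j)) s)"
    unfolding joint_kernel_def by (rule prod_sum_PiE[symmetric]) (simp_all add: fin)
  also have "\<dots> = 1"
    using Pl_sum restrict_PiE_UNIV[OF u] by (intro prod.neutral) blast
  finally show "(\<Sum>y\<in>Pi\<^sub>E UNIV Zs. joint_kernel E Pl u y) = 1" .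
qed

lemma kernel_op_joint_kernel_local:
  assumes fin: "\<And>j. finite (Zs j)"
    and Pl_sum: "\<forall>j. \<forall>x\<in>Pi\<^sub>E (nbhd E 1 j) Zs. (\<Sum>s\<in>Zs j. Pl j x s) = 1"
    and f: "depends_only_on (Pi\<^sub>E UNIV Zs) A f"
    and b0: "b0 \<in> Pi\<^sub>E (- A) Zs" and z: "z \<in> Pi\<^sub>E UNIV Zs"
  shows "kernel_op (Pi\<^sub>E UNIV Zs) (joint_kernel E Pl) f z
     = (\<Sum>a\<in>Pi\<^sub>E A Zs. (\<Prod>j\<in>A. Pl j (restrict z (nbhd E 1 j)) (a j)) * f (Defs.merge A a b0))"
  unfolding kernel_op_def joint_kernel_def
proof (rule sum_prod_PiE_marginal[OF fin])
  show "(\<Sum>s\<in>Zs j. Pl j (restrict z (nbhd E 1 j)) s) = 1" for j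
    using Pl_sum restrict_PiE_UNIV[OF z] by blast
  show "f (Defs.merge A a b) = f (Defs.merge A a b0)" if "a \<in> Pi\<^sub>E A Zs" "b \<in> Pi\<^sub>E (- A) Zs" for a b
  proof -
    have "\<forall>j\<in>A. Defs.merge A a b j = Defs.merge A a b0 j"
      by (simp add: Defs.merge_def)
    then show ?thesis
      using f merge_in_PiE_UNIV[OF that] merge_in_PiE_UNIV[OF that(1) b0]
      unfolding depends_only_on_def by blast
  qed
qed

lemma depends_only_on_kernel_op_joint_kernel:
  assumes fin: "\<And>j. Zs j \<noteq> {} \<and> finite (Zs j)"
    and Pl_sum: "\<forall>j. \<forall>x\<in>Pi\<^sub>E (nbhd E 1 j) Zs. (\<Sum>s\<in>Zs j. Pl j x s) = 1"
    and f: "depends_only_on (Pi\<^sub>E UNIV Zs) (nbhd E k i) f"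
  shows "depends_only_on (Pi\<^sub>E UNIV Zs) (nbhd E (Suc k) i)
           (kernel_op (Pi\<^sub>E UNIV Zs) (joint_kernel E Pl) f)"
  unfolding depends_only_on_def
proof (intro ballI impI)
  fix z z' assume z: "z \<in> Pi\<^sub>E UNIV Zs" and z': "z' \<in> Pi\<^sub>E UNIV Zs"
    and agree: "\<forall>j\<in>nbhd E (Suc k) i. z j = z' j"
  obtain b0 where b0: "b0 \<in> Pi\<^sub>E (- nbhd E k i) Zs"
    using fin by (metis PiE_eq_empty_iff ex_in_conv)
  have "restrict z (nbhd E 1 j) = restrict z' (nbhd E 1 j)" if "j \<in> nbhd E k i" for j
    using agree nbhd_Suc[OF that] by (intro restrict_ext) blast
  then show "kernel_op (Pi\<^sub>E UNIV Zs) (joint_kernel E Pl) f z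
           = kernel_op (Pi\<^sub>E UNIV Zs) (joint_kernel E Pl) f z'"
    using fin by (simp add: kernel_op_joint_kernel_local[OF _ Pl_sum f b0] z z')
qed

lemma marg_pos:
  fixes N :: "'a::finite set"
  assumes "\<And>j. Zs j \<noteq> {} \<and> finite (Zs j)" "\<forall>z\<in>Pi\<^sub>E UNIV Zs. 0 < p z" "x \<in> Pi\<^sub>E N Zs"
  shows "0 < marg N Zs p x"
  unfolding marg_def using assms merge_in_PiE_UNIV[OF assms(3)]
  by (intro sum_pos finite_PiE) (auto simp: PiE_eq_empty_iff)

lemma sum_conditional_weights:
  fixes N :: "'a::finite set"
  assumes "\<And>j. Zs j \<noteq> {} \<and> finite (Zs j)" "\<forall>z\<in>Pi\<^sub>E UNIV Zs. 0 < p z" "x \<in> Pi\<^sub>E N Zs"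
  shows "(\<Sum>w\<in>Pi\<^sub>E (- N) Zs. p (Defs.merge N x w) / marg N Zs p x) = 1"
  using marg_pos[OF assms] by (simp add: sum_divide_distrib[symmetric] marg_def)

lemma kernel_op_sub_kernel:
  assumes fin: "\<And>j. finite (Zs j)"
    and f_g: "\<forall>y\<in>Pi\<^sub>E UNIV Zs. f y = g (restrict y N)"
  shows "kernel_op (Pi\<^sub>E N Zs) (sub_kernel N Zs p K) g x
    = (\<Sum>w\<in>Pi\<^sub>E (- N) Zs. p (Defs.merge N x w) / marg N Zs p x
                            * kernel_op (Pi\<^sub>E UNIV Zs) K f (Defs.merge N x w))"
proof -
  define c where "c w = p (Defs.merge N x w) / marg N Zs p x" for w
  have f_merge: "f (Defs.merge N x' w') = g x'" if "x' \<in> Pi\<^sub>E N Zs" "w' \<in> Pi\<^sub>E (- N) Zs" for x' w'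
    using f_g merge_in_PiE_UNIV[OF that] restrict_merge_left[OF that(1)] by simp
  have "kernel_op (Pi\<^sub>E N Zs) (sub_kernel N Zs p K) g x
    = (\<Sum>x'\<in>Pi\<^sub>E N Zs. \<Sum>w\<in>Pi\<^sub>E (- N) Zs. c w *
         (\<Sum>w'\<in>Pi\<^sub>E (- N) Zs. K (Defs.merge N x w) (Defs.merge N x' w') * f (Defs.merge N x' w')))"
    unfolding kernel_op_def sub_kernel_def kernN_def c_def
    by (auto simp: sum_distrib_left sum_distrib_right mult.assoc f_merge intro!: sum.cong)
  also have "\<dots> = (\<Sum>w\<in>Pi\<^sub>E (- N) Zs. c w * (\<Sum>x'\<in>Pi\<^sub>E N Zs. \<Sum>w'\<in>Pi\<^sub>E (- N) Zs.
         K (Defs.merge N x w) (Defs.merge N x' w') * f (Defs.merge N x' w')))"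
    by (subst sum.swap) (simp add: sum_distrib_left)
  also have "\<dots> = (\<Sum>w\<in>Pi\<^sub>E (- N) Zs. c w * kernel_op (Pi\<^sub>E UNIV Zs) K f (Defs.merge N x w))"
    unfolding kernel_op_def by (simp add: sum_PiE_UNIV_split[OF fin, where A = N])
  finally show ?thesis
    unfolding c_def .
qed

lemma stochastic_on_sub_kernel:
  fixes N :: "'a::finite set"
  assumes fin: "\<And>j. Zs j \<noteq> {} \<and> finite (Zs j)"
    and K: "stochastic_on (Pi\<^sub>E UNIV Zs) K"
    and p: "\<forall>z\<in>Pi\<^sub>E UNIV Zs. 0 < p z"
  shows "stochastic_on (Pi\<^sub>E N Zs) (sub_kernel N Zs p K)"
  unfolding stochastic_on_def
proof (intro conjI ballI)
  fix u y assume u: "u \<in> Pi\<^sub>E N Zs" and y: "y \<in> Pi\<^sub>E N Zs"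
  show "0 \<le> sub_kernel N Zs p K u y"
    using K p marg_pos[OF fin p u] merge_in_PiE_UNIV[OF u] merge_in_PiE_UNIV[OF y]
    unfolding sub_kernel_def kernN_def stochastic_on_def
    by (intro sum_nonneg mult_nonneg_nonneg divide_nonneg_pos) (auto intro: less_imp_le)
next
  fix u assume u: "u \<in> Pi\<^sub>E N Zs"
  have "(\<Sum>y\<in>Pi\<^sub>E N Zs. sub_kernel N Zs p K u y) = kernel_op (Pi\<^sub>E N Zs) (sub_kernel N Zs p K) (\<lambda>_. 1) u"
    by (simp add: kernel_op_def)
  also have "\<dots> = (\<Sum>w\<in>Pi\<^sub>E (- N) Zs. p (Defs.merge N u w) / marg N Zs p u
                                 * kernel_op (Pi\<^sub>E UNIV Zs) K (\<lambda>_. 1) (Defs.merge N u w))"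
    using fin by (intro kernel_op_sub_kernel) auto
  also have "\<dots> = (\<Sum>w\<in>Pi\<^sub>E (- N) Zs. p (Defs.merge N u w) / marg N Zs p u)"
    using K merge_in_PiE_UNIV[OF u]
    by (intro sum.cong) (auto simp: kernel_op_def stochastic_on_def)
  also have "\<dots> = 1"
    using sum_conditional_weights[OF fin p u] .
  finally show "(\<Sum>y\<in>Pi\<^sub>E N Zs. sub_kernel N Zs p K u y) = 1" .
qed

lemma kernel_op_eq_sub_kernel_op:
  fixes N :: "'a::finite set"
  assumes fin: "\<And>j. Zs j \<noteq> {} \<and> finite (Zs j)"
    and p: "\<forall>z\<in>Pi\<^sub>E UNIV Zs. 0 < p z"
    and f_g: "\<forall>y\<in>Pi\<^sub>E UNIV Zs. f y = g (restrict y N)"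
    and Kf: "depends_only_on (Pi\<^sub>E UNIV Zs) N (kernel_op (Pi\<^sub>E UNIV Zs) K f)"
    and y: "y \<in> Pi\<^sub>E UNIV Zs"
  shows "kernel_op (Pi\<^sub>E UNIV Zs) K f y = kernel_op (Pi\<^sub>E N Zs) (sub_kernel N Zs p K) g (restrict y N)"
proof -
  let ?x = "restrict y N"
  have x: "?x \<in> Pi\<^sub>E N Zs"
    using y by (rule restrict_PiE_UNIV)
  have "kernel_op (Pi\<^sub>E UNIV Zs) K f (Defs.merge N ?x w) = kernel_op (Pi\<^sub>E UNIV Zs) K f y"
    if "w \<in> Pi\<^sub>E (- N) Zs" for w
  proof -
    have "\<forall>j\<in>N. Defs.merge N ?x w j = y j"
      by (simp add: Defs.merge_def)
    then show ?thesis
      using Kf merge_in_PiE_UNIV[OF x that] y unfolding depends_only_on_def by blast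
  qed
  then have "kernel_op (Pi\<^sub>E N Zs) (sub_kernel N Zs p K) g ?x
      = kernel_op (Pi\<^sub>E UNIV Zs) K f y * (\<Sum>w\<in>Pi\<^sub>E (- N) Zs. p (Defs.merge N ?x w) / marg N Zs p ?x)"
    using fin by (simp add: kernel_op_sub_kernel[OF _ f_g] sum_distrib_left mult.commute)
  then show ?thesis
    using sum_conditional_weights[OF fin p x] by simp
qed

lemma funpow_kernel_op_joint_kernel_eq_sub_kernel:
  fixes E :: "'a::finite \<Rightarrow> 'a \<Rightarrow> bool"
  assumes fin: "\<And>j. Zs j \<noteq> {} \<and> finite (Zs j)"
    and Pl_sum: "\<forall>j. \<forall>x\<in>Pi\<^sub>E (nbhd E 1 j) Zs. (\<Sum>s\<in>Zs j. Pl j x s) = 1"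
    and p: "\<forall>z\<in>Pi\<^sub>E UNIV Zs. 0 < p z"
    and h: "depends_only_on (Pi\<^sub>E UNIV Zs) (nbhd E k i) h"
    and h_g: "\<forall>y\<in>Pi\<^sub>E UNIV Zs. h y = g (restrict y N)"
    and N: "nbhd E (k + t) i \<subseteq> N"
  shows "\<forall>y\<in>Pi\<^sub>E UNIV Zs. (kernel_op (Pi\<^sub>E UNIV Zs) (joint_kernel E Pl) ^^ t) h y
           = (kernel_op (Pi\<^sub>E N Zs) (sub_kernel N Zs p (joint_kernel E Pl)) ^^ t) g (restrict y N)"
proof -
  let ?S = "Pi\<^sub>E UNIV Zs" and ?K = "joint_kernel E Pl"
  let ?Q = "sub_kernel N Zs p ?K"
  have "depends_only_on ?S (nbhd E (k + t) i) ((kernel_op ?S ?K ^^ t) h)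
      \<and> (\<forall>y\<in>?S. (kernel_op ?S ?K ^^ t) h y = (kernel_op (Pi\<^sub>E N Zs) ?Q ^^ t) g (restrict y N))"
    using N
  proof (induction t)
    case 0
    show ?case
      unfolding funpow_0 add_0_right using h h_g by blast
  next
    case (Suc t)
    have "nbhd E (k + t) i \<subseteq> N"
      using Suc.prems nbhd_mono[of "k + t" "k + Suc t" E i] by simp
    then have dep: "depends_only_on ?S (nbhd E (k + t) i) ((kernel_op ?S ?K ^^ t) h)"
      and IH: "\<forall>y\<in>?S. (kernel_op ?S ?K ^^ t) h y = (kernel_op (Pi\<^sub>E N Zs) ?Q ^^ t) g (restrict y N)"
      using Suc.IH by blast+
    have local:
      "depends_only_on ?S (nbhd E (Suc (k + t)) i) (kernel_op ?S ?K ((kernel_op ?S ?K ^^ t) h))"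
      by (rule depends_only_on_kernel_op_joint_kernel[OF fin Pl_sum dep])
    moreover have "nbhd E (Suc (k + t)) i \<subseteq> N"
      using Suc.prems by simp
    ultimately show ?case
      using kernel_op_eq_sub_kernel_op[OF fin p IH depends_only_on_mono]
      unfolding funpow.simps o_apply add_Suc_right by blast
  qed
  then show ?thesis by blast
qed

theorem mainTheorem20:
  fixes E :: "'a::finite \<Rightarrow> 'a \<Rightarrow> bool"
    and Zs :: "'a \<Rightarrow> 's set"
    and Pl :: "'a \<Rightarrow> ('a \<Rightarrow> 's) \<Rightarrow> 's \<Rightarrow> real"
    and \<pi> :: "('a \<Rightarrow> 's) \<Rightarrow> real"
    and i0 :: 'a and \<kappa>c \<kappa>r :: nat
    and r :: "('a \<Rightarrow> 's) \<Rightarrow> real" and \<gamma> :: real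
  assumes sym: "\<forall>i j. E i j \<longrightarrow> E j i"
    and Zs_fin: "\<forall>j. finite (Zs j) \<and> Zs j \<noteq> {}"
    and Pl_nonneg: "\<forall>j. \<forall>x\<in>Pi\<^sub>E (nbhd E 1 j) Zs. \<forall>s\<in>Zs j. Pl j x s \<ge> 0"
    and Pl_sum: "\<forall>j. \<forall>x\<in>Pi\<^sub>E (nbhd E 1 j) Zs. (\<Sum>s\<in>Zs j. Pl j x s) = 1"
    and irr: "irreducible_on (Pi\<^sub>E UNIV Zs) (joint_kernel E Pl)"
    and aper: "aperiodic_on (Pi\<^sub>E UNIV Zs) (joint_kernel E Pl)"
    and stat: "stationary_on (Pi\<^sub>E UNIV Zs) (joint_kernel E Pl) \<pi>"
    and full: "\<forall>z\<in>Pi\<^sub>E UNIV Zs. \<pi> z > 0"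
    and kc: "\<kappa>c \<ge> 1" and kr: "\<kappa>r < \<kappa>c"
    and r_range: "\<forall>x\<in>Pi\<^sub>E (nbhd E \<kappa>r i0) Zs. 0 \<le> r x \<and> r x \<le> 1"
    and g: "0 < \<gamma>" "\<gamma> < 1"
  shows "\<forall>z\<in>Pi\<^sub>E UNIV Zs.
    \<bar>disc_cost (Pi\<^sub>E (nbhd E \<kappa>c i0) Zs)
        (sub_kernel (nbhd E \<kappa>c i0) Zs \<pi> (joint_kernel E Pl))
        (\<lambda>x. r (restrict x (nbhd E \<kappa>r i0))) \<gamma> (restrict z (nbhd E \<kappa>c i0))
     - disc_cost (Pi\<^sub>E UNIV Zs) (joint_kernel E Pl)
        (\<lambda>y. r (restrict y (nbhd E \<kappa>r i0))) \<gamma> z\<bar>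
    \<le> \<gamma> ^ (\<kappa>c - \<kappa>r + 1) / (1 - \<gamma>)"
proof
  fix z assume z: "z \<in> Pi\<^sub>E UNIV Zs"
  let ?N = "nbhd E \<kappa>c i0" and ?Nr = "nbhd E \<kappa>r i0"
  let ?h = "\<lambda>y. r (restrict y ?Nr)"
  have fin: "\<And>j. Zs j \<noteq> {} \<and> finite (Zs j)"
    using Zs_fin by blast
  have Nr_N: "?Nr \<subseteq> ?N"
    using kr by (intro nbhd_mono) simp
  have h_restrict: "\<forall>y\<in>Pi\<^sub>E UNIV Zs. ?h y = ?h (restrict y ?N)"
    using Nr_N by (simp add: Int_absorb1)
  have h_range: "\<forall>y\<in>Pi\<^sub>E A Zs. 0 \<le> ?h y \<and> ?h y \<le> 1" if "?Nr \<subseteq> A" for A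
  proof
    fix y assume "y \<in> Pi\<^sub>E A Zs"
    then have "restrict y ?Nr \<in> Pi\<^sub>E ?Nr Zs"
      using that by auto
    then show "0 \<le> ?h y \<and> ?h y \<le> 1"
      using r_range by blast
  qed
  have agree: "(kernel_op (Pi\<^sub>E ?N Zs) (sub_kernel ?N Zs \<pi> (joint_kernel E Pl)) ^^ t) ?h (restrict z ?N)
             = (kernel_op (Pi\<^sub>E UNIV Zs) (joint_kernel E Pl) ^^ t) ?h z" if "t \<le> \<kappa>c - \<kappa>r" for t
    using funpow_kernel_op_joint_kernel_eq_sub_kernel[where g = ?h, OF fin Pl_sum full
        depends_only_on_restrict h_restrict nbhd_mono, of t] that kr z
    by simp
  have K: "stochastic_on (Pi\<^sub>E UNIV Zs) (joint_kernel E Pl)"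
    using Zs_fin Pl_nonneg Pl_sum by (intro stochastic_on_joint_kernel) auto
  show "\<bar>disc_cost (Pi\<^sub>E ?N Zs) (sub_kernel ?N Zs \<pi> (joint_kernel E Pl)) ?h \<gamma> (restrict z ?N)
        - disc_cost (Pi\<^sub>E UNIV Zs) (joint_kernel E Pl) ?h \<gamma> z\<bar> \<le> \<gamma> ^ (\<kappa>c - \<kappa>r + 1) / (1 - \<gamma>)"
    using fin Nr_N z agree g
    by (intro disc_cost_diff_le stochastic_on_sub_kernel[OF fin K full] K h_range finite_PiE) auto
qed

end
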